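(* Let $n\ge2$, $K\in\{1,\ldots,n-1\}$, $\gamma>0$, $\mathcal{C}=\{x\in\mathbb{R}^n\mid \mathbf{1}^\top x=1,\ x\ge0\}$, and let $f$ be real-valued and continuously differentiable on an open set $\mathcal{O}\supset\mathcal{C}$. Let $x^*$ be a d-stationary point of $$\min_{x\in\mathbb{R}^n}\ f(x)+\gamma T_{K,n,1}(x)+\delta_{\mathcal C}(x).$$ If $\gamma>\sqrt2 M'$, where $M'$ is a Lipschitz constant of $f$ on $\mathcal C$ with respect to the $\ell_2$ norm, then $T_{K,n,1}(x^* )=0$. If in addition $0\in\mathcal O$ and $f$ is $M$-smooth on $\mathcal O$, then $T_{K,n,1}(x^* )=0$ holds whenever $\gamma>\min\{\sqrt2M',\ \sqrt2(\|\nabla f(0)\|_2+M)\}$.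
   Context: $T_{K,n,1}(x)$ is the sum of the $n-K$ smallest values among $|x_1|,\ldots,|x_n|$; $\mathbf 1$ is the all-ones vector; $\delta_{\mathcal C}$ is the indicator of $\mathcal C$. $f$ is $M$-smooth on $\mathcal O$ if $\|\nabla f(x)-\nabla f(y)\|_2\le M\|x-y\|_2$ for $x,y\in\mathcal O$. $x^*\in\mathcal C$ is d-stationary if the directional derivative of the objective at $x^*$ is $\ge0$ for every $d$ in the feasible cone $\mathcal{F}(x^*;\mathcal{C})=\{d\mid \exists\varsigma'>0:\ x^*+\varsigma d\in\mathcal{C}\ \forall\varsigma\in(0,\varsigma')\}$. *)

theory Defs
  imports "HOL-Analysis.Analysis" "HOL-Library.Multiset"
begin

definition T_K :: "nat \<Rightarrow> real ^ 'n \<Rightarrow> real" where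
  "T_K K x = sum_list (take (CARD('n) - K)
      (sorted_list_of_multiset (image_mset (\<lambda>i. \<bar>x $ i\<bar>) (mset_set (UNIV :: 'n set)))))"

definition std_simplex :: "(real ^ 'n) set" where
  "std_simplex = {x. (\<Sum>i\<in>UNIV. x $ i) = 1 \<and> (\<forall>i. 0 \<le> x $ i)}"

definition indicator_ext :: "'a set \<Rightarrow> 'a \<Rightarrow> ereal" where
  "indicator_ext C x = (if x \<in> C then 0 else \<infinity>)"

definition feasible_cone :: "(real ^ 'n) set \<Rightarrow> real ^ 'n \<Rightarrow> (real ^ 'n) set" where
  "feasible_cone C x = {d. \<exists>s'>0. \<forall>s. 0 < s \<and> s < s' \<longrightarrow> x + s *\<^sub>R d \<in> C}"

definition d_stationary :: "(real ^ 'n \<Rightarrow> ereal) \<Rightarrow> (real ^ 'n) set \<Rightarrow> real ^ 'n \<Rightarrow> bool" where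
  "d_stationary F C x \<longleftrightarrow> x \<in> C \<and>
     (\<forall>d \<in> feasible_cone C x. \<exists>L::ereal.
        ((\<lambda>t. (F (x + t *\<^sub>R d) - F x) / ereal t) \<longlongrightarrow> L) (at_right 0) \<and> 0 \<le> L)"

end

theory Submission
  imports Defs
begin

text \<open>
  Suppose \<open>T_K K x\<^sup>* > 0\<close>. Then some coordinate \<open>x\<^sup>*\<^sub>i > 0\<close> lies among the \<open>n - K\<close> smallest
  ones, while some index \<open>j\<close> lies outside that set (as \<open>K \<ge> 1\<close>). Moving mass \<open>t\<close> from \<open>i\<close>
  to \<open>j\<close> stays in the simplex, decreases the sum over that fixed index set, hence \<open>T_K\<close>, by
  \<open>t\<close>, and changes \<open>f\<close> by at most \<open>\<surd>2 M' t\<close>, as the direction \<open>e\<^sub>j - e\<^sub>i\<close> has norm \<open>\<surd>2\<close>.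
  So the directional derivative along it is at most \<open>\<surd>2 M' - \<gamma> < 0\<close>, contradicting
  d-stationarity. For the second bound, \<open>\<nabla>f\<close> is bounded by \<open>\<parallel>\<nabla>f(0)\<parallel> + M\<close> on the simplex,
  which lies in the unit ball, so by the mean value inequality \<open>\<parallel>\<nabla>f(0)\<parallel> + M\<close> is itself a
  Lipschitz constant of \<open>f\<close> on the simplex.
\<close>

lemma sum_take_sorted_list_of_multiset_le:
  fixes W :: "'a :: {linorder, ordered_comm_monoid_add} multiset"
  assumes "Z \<subseteq># W"
  shows "sum_list (take (size Z) (sorted_list_of_multiset W)) \<le> sum_mset Z"
  using assms
proof (induction W arbitrary: Z rule: multiset_induct_min)
  case empty
  then show ?case by simp
next
  case (add x W)
  have sorted_W: "sorted_list_of_multiset (add_mset x W) = x # sorted_list_of_multiset W"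
    using add.hyps by (simp add: insort_is_Cons)
  show ?case
  proof (cases "x \<in># Z")
    case True
    then obtain Z' where Z: "Z = add_mset x Z'" by (metis multi_member_split)
    with add.prems have "Z' \<subseteq># W" by simp
    from add.IH[OF this] show ?thesis using Z sorted_W by (simp add: add_left_mono)
  next
    case False
    show ?thesis
    proof (cases "Z = {#}")
      case False
      then obtain z Z' where Z: "Z = add_mset z Z'" by (metis multiset_cases)
      have "Z \<subseteq># W" using add.prems \<open>x \<notin># Z\<close>
        by (simp add: inter_add_left1 subset_mset.inf.absorb_iff2)
      then have "Z' \<subseteq># W" "x \<le> z"
        using add.hyps Z by (auto dest: mset_subset_eq_insertD)
      with add.IH[of Z'] show ?thesis using Z sorted_W by (simp add: add_mono)
    qed simp
  qed
qed

lemma sort_map_eq_map_sort_key: "sort (map f xs) = map f (sort_key f xs)"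
  by (rule properties_for_sort) (simp_all add: mset_sort)

lemma T_K_le_sum_abs:
  fixes y :: "real ^ 'n"
  assumes "card S = CARD('n) - K"
  shows "T_K K y \<le> (\<Sum>k\<in>S. \<bar>y $ k\<bar>)"
proof -
  let ?abs = "\<lambda>i. \<bar>y $ i\<bar>"
  let ?Z = "image_mset ?abs (mset_set S)"
  have "mset_set S \<subseteq># mset_set (UNIV :: 'n set)"
    by (rule subset_imp_msubset_mset_set) auto
  then have "?Z \<subseteq># image_mset ?abs (mset_set UNIV)"
    by (rule image_mset_subseteq_mono)
  from sum_take_sorted_list_of_multiset_le[OF this] show ?thesis
    by (simp add: T_K_def sum_unfold_sum_mset assms)
qed

lemma T_K_eq_sum_abs:
  fixes y :: "real ^ 'n"
  obtains S where "card S = CARD('n) - K" "T_K K y = (\<Sum>k\<in>S. \<bar>y $ k\<bar>)"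
proof -
  obtain ids where ids: "distinct ids" "set ids = (UNIV :: 'n set)"
    using finite_distinct_list[of "UNIV :: 'n set"] by auto
  let ?abs = "\<lambda>i. \<bar>y $ i\<bar>"
  let ?m = "CARD('n) - K"
  define js where "js = sort_key ?abs ids"
  have js: "distinct js" "length js = CARD('n)"
    using ids distinct_card[OF ids(1)] by (auto simp: js_def)
  have "mset_set (UNIV :: 'n set) = mset ids"
    using mset_set_set[OF ids(1)] ids(2) by simp
  then have "T_K K y = sum_list (map ?abs (take ?m js))"
    by (simp add: T_K_def sort_map_eq_map_sort_key js_def take_map
        mset_map[symmetric] del: mset_map)
  also have "\<dots> = sum ?abs (set (take ?m js))"
    using js by (simp add: sum_list_distinct_conv_sum_set)
  finally show ?thesis
    using js by (intro that[of "set (take ?m js)"]) (simp_all add: distinct_card)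
qed

lemma std_simplex_convex: "convex (std_simplex :: (real ^ 'n) set)"
  unfolding convex_def
proof (intro ballI allI impI)
  fix x y :: "real ^ 'n" and u v :: real
  assume x: "x \<in> std_simplex" and y: "y \<in> std_simplex" and uv: "0 \<le> u" "0 \<le> v" "u + v = 1"
  have "(\<Sum>i\<in>UNIV. (u *\<^sub>R x + v *\<^sub>R y) $ i) = u * (\<Sum>i\<in>UNIV. x $ i) + v * (\<Sum>i\<in>UNIV. y $ i)"
    by (simp add: sum.distrib sum_distrib_left)
  with x y uv show "u *\<^sub>R x + v *\<^sub>R y \<in> std_simplex"
    by (simp add: std_simplex_def)
qed

lemma norm_le_1_if_std_simplex:
  assumes "x \<in> std_simplex"
  shows "norm (x :: real ^ 'n) \<le> 1"
proof -
  have "norm x \<le> (\<Sum>i\<in>UNIV. \<bar>x $ i\<bar>)" by (rule norm_le_l1_cart)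
  also have "\<dots> = 1" using assms by (simp add: std_simplex_def)
  finally show ?thesis .
qed

lemma std_simplex_nonzero: "x \<in> std_simplex \<Longrightarrow> x \<noteq> 0"
  by (auto simp: std_simplex_def)

lemma std_simplex_shift_mass:
  fixes x :: "real ^ 'n"
  assumes "x \<in> std_simplex" "i \<noteq> j" "0 \<le> t" "t \<le> x $ i"
  shows "x + t *\<^sub>R (axis j 1 - axis i 1) \<in> std_simplex"
proof -
  have "(\<Sum>k\<in>UNIV. (axis j 1 - axis i 1) $ k) = (0::real)"
    by (simp add: sum_subtractf axis_def)
  then have "(\<Sum>k\<in>UNIV. (x + t *\<^sub>R (axis j 1 - axis i 1)) $ k) = (\<Sum>k\<in>UNIV. x $ k)"
    by (simp add: sum.distrib flip: sum_distrib_left)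
  with assms show ?thesis
    by (auto simp: std_simplex_def axis_def)
qed

lemma norm_axis_diff: "i \<noteq> j \<Longrightarrow> norm (axis j (1::real) - axis i 1) = sqrt 2"
  by (simp add: norm_eq_sqrt_inner inner_diff_left inner_diff_right inner_axis_axis)

lemma T_K_shift_mass_le:
  fixes x :: "real ^ 'n"
  assumes S: "card S = CARD('n) - K" "T_K K x = (\<Sum>k\<in>S. \<bar>x $ k\<bar>)"
    and ij: "i \<in> S" "j \<notin> S" and t: "0 \<le> t" "t \<le> x $ i"
  shows "T_K K (x + t *\<^sub>R (axis j 1 - axis i 1)) \<le> T_K K x - t"
proof -
  have "T_K K (x + t *\<^sub>R (axis j 1 - axis i 1))
      \<le> (\<Sum>k\<in>S. \<bar>(x + t *\<^sub>R (axis j 1 - axis i 1)) $ k\<bar>)"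
    by (rule T_K_le_sum_abs[OF S(1)])
  also have "\<dots> = (\<Sum>k\<in>S. \<bar>x $ k\<bar> - (if k = i then t else 0))"
    using ij t by (intro sum.cong) (auto simp: axis_def)
  also have "\<dots> = T_K K x - t"
    using ij(1) S(2) by (simp add: sum_subtractf)
  finally show ?thesis .
qed

lemma not_d_stationary_if_descent:
  assumes "d \<in> feasible_cone C x" "c < 0"
    and "\<forall>\<^sub>F t in at_right 0. (F (x + t *\<^sub>R d) - F x) / ereal t \<le> ereal c"
  shows "\<not> d_stationary F C x"
proof
  assume "d_stationary F C x"
  with assms(1) obtain L where
    L: "((\<lambda>t. (F (x + t *\<^sub>R d) - F x) / ereal t) \<longlongrightarrow> L) (at_right 0)" "0 \<le> L"
    unfolding d_stationary_def by blast
  have "L \<le> ereal c"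
    by (rule tendsto_le[OF _ tendsto_const L(1) assms(3)]) simp
  with L(2) have "ereal 0 \<le> ereal c" by (metis order_trans zero_ereal_def)
  with assms(2) show False by simp
qed

lemma T_K_eq_0_if_d_stationary:
  fixes f :: "real ^ 'n \<Rightarrow> real" and x :: "real ^ 'n"
  assumes K: "1 \<le> K"
    and dstat: "d_stationary (\<lambda>x. ereal (f x + \<gamma> * T_K K x) + indicator_ext std_simplex x)
                  std_simplex x"
    and lip: "L-lipschitz_on std_simplex f" and gamma: "\<gamma> > sqrt 2 * L"
  shows "T_K K x = 0"
proof (rule ccontr)
  assume T_nonzero: "T_K K x \<noteq> 0"
  define F where "F = (\<lambda>x. ereal (f x + \<gamma> * T_K K x) + indicator_ext std_simplex x)"
  have "0 \<le> L" using lip by (rule lipschitz_on_nonneg)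
  then have "0 \<le> \<gamma>" using gamma by (smt (verit) real_sqrt_ge_zero mult_nonneg_nonneg)
  have x: "x \<in> std_simplex" using dstat by (simp add: d_stationary_def)
  obtain S where S: "card S = CARD('n) - K" "T_K K x = (\<Sum>k\<in>S. \<bar>x $ k\<bar>)"
    by (rule T_K_eq_sum_abs)
  obtain i where i: "i \<in> S" "x $ i \<noteq> 0"
    using T_nonzero S(2) by (metis abs_eq_0 sum.neutral)
  have xi: "x $ i > 0" using x i by (auto simp: std_simplex_def less_le)
  have "0 < CARD('n)" by (rule finite_UNIV_card_ge_0) simp
  with S(1) K have "card S < CARD('n)" by linarith
  then have "S \<noteq> UNIV" by auto
  then obtain j where j: "j \<notin> S" by auto
  with i have "i \<noteq> j" by auto
  define d where "d = axis j (1::real) - axis i 1"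
  have shift: "x + t *\<^sub>R d \<in> std_simplex" if "0 \<le> t" "t \<le> x $ i" for t
    unfolding d_def using std_simplex_shift_mass[OF x \<open>i \<noteq> j\<close> that] .
  have "(F (x + t *\<^sub>R d) - F x) / ereal t \<le> ereal (sqrt 2 * L - \<gamma>)"
    if t: "0 < t" "t < x $ i" for t
  proof -
    have "f (x + t *\<^sub>R d) - f x \<le> L * dist (x + t *\<^sub>R d) x"
      using lipschitz_onD[OF lip shift[of t] x] t by (simp add: dist_real_def abs_le_iff)
    also have "\<dots> = sqrt 2 * L * t"
      using t norm_axis_diff[OF \<open>i \<noteq> j\<close>] by (simp add: dist_norm d_def)
    finally have "f (x + t *\<^sub>R d) - f x \<le> sqrt 2 * L * t" .
    moreover have "\<gamma> * T_K K (x + t *\<^sub>R d) \<le> \<gamma> * (T_K K x - t)"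
      using T_K_shift_mass_le[OF S i(1) j] t \<open>0 \<le> \<gamma>\<close>
      by (intro mult_left_mono) (auto simp: d_def)
    ultimately have "f (x + t *\<^sub>R d) + \<gamma> * T_K K (x + t *\<^sub>R d) - (f x + \<gamma> * T_K K x)
        \<le> (sqrt 2 * L - \<gamma>) * t"
      by (simp add: algebra_simps)
    then have "(f (x + t *\<^sub>R d) + \<gamma> * T_K K (x + t *\<^sub>R d) - (f x + \<gamma> * T_K K x)) / t
        \<le> sqrt 2 * L - \<gamma>"
      using t by (simp add: divide_le_eq)
    then show ?thesis
      using t shift[of t] x by (simp add: F_def indicator_ext_def)
  qed
  then have "\<forall>\<^sub>F t in at_right 0. (F (x + t *\<^sub>R d) - F x) / ereal t \<le> ereal (sqrt 2 * L - \<gamma>)"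
    using xi by (auto simp: eventually_at_right_field)
  moreover have "d \<in> feasible_cone std_simplex x"
    unfolding feasible_cone_def using shift xi by (auto intro!: exI[of _ "x $ i"])
  ultimately have "\<not> d_stationary F std_simplex x"
    using gamma by (intro not_d_stationary_if_descent) auto
  with dstat show False by (simp add: F_def)
qed

lemma lipschitz_on_if_gradient_bounded:
  fixes f :: "'a :: real_inner \<Rightarrow> real"
  assumes "convex S" "0 \<le> B"
    and "\<And>x. x \<in> S \<Longrightarrow> (f has_derivative (\<lambda>h. gradf x \<bullet> h)) (at x within S)"
    and "\<And>x. x \<in> S \<Longrightarrow> norm (gradf x) \<le> B"
  shows "B-lipschitz_on S f"
proof (rule lipschitz_onI[OF _ assms(2)])
  fix x y assume "x \<in> S" "y \<in> S"
  have "norm (f x - f y) \<le> B * norm (x - y)"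
  proof (rule differentiable_bound[OF assms(1) assms(3) _ \<open>x \<in> S\<close> \<open>y \<in> S\<close>])
    fix z assume "z \<in> S"
    show "onorm (\<lambda>h. gradf z \<bullet> h) \<le> B"
    proof (rule onorm_bound[OF assms(2)])
      fix h
      have "norm (gradf z \<bullet> h) \<le> norm (gradf z) * norm h"
        by (simp add: Cauchy_Schwarz_ineq2)
      also have "\<dots> \<le> B * norm h"
        using assms(4)[OF \<open>z \<in> S\<close>] by (simp add: mult_right_mono)
      finally show "norm (gradf z \<bullet> h) \<le> B * norm h" .
    qed
  qed
  then show "dist (f x) (f y) \<le> B * dist x y" by (simp add: dist_norm)
qed

lemma norm_gradient_le_on_std_simplex:
  fixes gradf :: "real ^ 'n \<Rightarrow> real ^ 'n"
  assumes "0 \<in> Op" "std_simplex \<subseteq> Op"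
    and smooth: "\<forall>x\<in>Op. \<forall>y\<in>Op. norm (gradf x - gradf y) \<le> M * norm (x - y)"
    and x: "x \<in> std_simplex"
  shows "norm (gradf x) \<le> norm (gradf 0) + M"
proof -
  have diff: "norm (gradf x - gradf 0) \<le> M * norm x"
    using smooth assms(1,2) x by fastforce
  have "0 < norm x" using std_simplex_nonzero[OF x] by simp
  with diff have "0 \<le> M" by (smt (verit) norm_ge_zero zero_le_mult_iff)
  then have "M * norm x \<le> M"
    using mult_left_mono[OF norm_le_1_if_std_simplex[OF x]] by simp
  with diff show ?thesis
    using norm_triangle_ineq[of "gradf 0" "gradf x - gradf 0"] by simp
qed

theorem mainTheorem13:
  fixes f :: "real ^ 'n \<Rightarrow> real" and gradf :: "real ^ 'n \<Rightarrow> real ^ 'n"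
    and Op :: "(real ^ 'n) set" and K :: nat and \<gamma> M' M :: real and xs :: "real ^ 'n"
  assumes n2: "CARD('n) \<ge> 2"
    and K: "1 \<le> K" "K \<le> CARD('n) - 1"
    and gamma: "\<gamma> > 0"
    and Oh: "open Op" "std_simplex \<subseteq> Op"
    and grad: "\<And>x. x \<in> Op \<Longrightarrow> (f has_derivative (\<lambda>h. gradf x \<bullet> h)) (at x)"
    and cont: "continuous_on Op gradf"
    and dstat: "d_stationary (\<lambda>x. ereal (f x + \<gamma> * T_K K x) + indicator_ext std_simplex x) std_simplex xs"
    and lip: "M'-lipschitz_on std_simplex f"
  shows "(\<gamma> > sqrt 2 * M' \<longrightarrow> T_K K xs = 0) \<and>
         ((0 \<in> Op \<and> (\<forall>x\<in>Op. \<forall>y\<in>Op. norm (gradf x - gradf y) \<le> M * norm (x - y))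
            \<and> \<gamma> > min (sqrt 2 * M') (sqrt 2 * (norm (gradf 0) + M))) \<longrightarrow> T_K K xs = 0)"
proof -
  have "T_K K xs = 0"
    if "0 \<in> Op" and smooth: "\<forall>x\<in>Op. \<forall>y\<in>Op. norm (gradf x - gradf y) \<le> M * norm (x - y)"
      and "\<gamma> > sqrt 2 * (norm (gradf 0) + M)"
  proof -
    have bound: "norm (gradf x) \<le> norm (gradf 0) + M" if "x \<in> std_simplex" for x
      using norm_gradient_le_on_std_simplex[OF \<open>0 \<in> Op\<close> Oh(2) smooth that] .
    have "xs \<in> std_simplex" using dstat by (simp add: d_stationary_def)
    then have "0 \<le> norm (gradf 0) + M" using bound norm_ge_zero order_trans by blast
    then have "(norm (gradf 0) + M)-lipschitz_on std_simplex f"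
      using grad Oh(2) bound
      by (intro lipschitz_on_if_gradient_bounded std_simplex_convex)
         (auto intro: has_derivative_at_withinI)
    from T_K_eq_0_if_d_stationary[OF K(1) dstat this] show ?thesis
      using \<open>\<gamma> > sqrt 2 * (norm (gradf 0) + M)\<close> .
  qed
  then show ?thesis
    using T_K_eq_0_if_d_stationary[OF K(1) dstat lip] by (auto simp: min_less_iff_disj)
qed

end
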